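(* Let $G$ be a $K_4$-free graph with $n$ vertices and $e$ edges, let $P$ be a greedy partition of $G$ with size $r=r(P)$, and let $r_2$ be the number of cliques of $P$ of size at least $2$. Then $e\le r(n-r)+r_2(n-r-r_2)$.
   Context: A good partition $P$ of $V(G)$ is a partition of $V(G)$ into disjoint sets $C_1, \dots, C_r$ (the cliques of $P$), each inducing a complete subgraph of $G$, indexed so that $|C_1|\le\dots\le |C_r|$; its size is $r(P)=r$. It is a greedy partition if for every $i\ge1$ the set $C_1\cup\dots\cup C_i$ induces a subgraph with no complete subgraph on $|C_i|+1$ vertices. For $K_4$-free $G$, every clique of $P$ has size $1$, $2$ or $3$. *)

theory Defs
  imports Main
begin

text \<open>Simple graphs: a finite vertex set V with a symmetric, irreflexive
adjacency relation E (only its restriction to V matters).\<close>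

definition simple_graph :: "'a set \<Rightarrow> ('a \<Rightarrow> 'a \<Rightarrow> bool) \<Rightarrow> bool" where
  "simple_graph V E \<longleftrightarrow> finite V \<and> (\<forall>u v. E u v \<longrightarrow> E v u) \<and> (\<forall>v. \<not> E v v)"

definition edges :: "'a set \<Rightarrow> ('a \<Rightarrow> 'a \<Rightarrow> bool) \<Rightarrow> 'a set set" where
  "edges V E = {{u, v} | u v. u \<in> V \<and> v \<in> V \<and> E u v}"

definition is_clique :: "'a set \<Rightarrow> ('a \<Rightarrow> 'a \<Rightarrow> bool) \<Rightarrow> 'a set \<Rightarrow> bool" where
  "is_clique V E C \<longleftrightarrow> C \<subseteq> V \<and> (\<forall>u\<in>C. \<forall>v\<in>C. u \<noteq> v \<longrightarrow> E u v)"

definition Kfree :: "nat \<Rightarrow> 'a set \<Rightarrow> ('a \<Rightarrow> 'a \<Rightarrow> bool) \<Rightarrow> bool" where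
  "Kfree k V E \<longleftrightarrow> \<not> (\<exists>C. is_clique V E C \<and> card C = k \<and> finite C)"

definition good_partition :: "'a set \<Rightarrow> ('a \<Rightarrow> 'a \<Rightarrow> bool) \<Rightarrow> 'a set list \<Rightarrow> bool" where
  "good_partition V E P \<longleftrightarrow>
     (\<forall>C\<in>set P. C \<noteq> {} \<and> is_clique V E C) \<and>
     (\<forall>i<length P. \<forall>j<length P. i \<noteq> j \<longrightarrow> P ! i \<inter> P ! j = {}) \<and>
     \<Union>(set P) = V \<and>
     sorted (map card P)"

definition greedy_partition :: "'a set \<Rightarrow> ('a \<Rightarrow> 'a \<Rightarrow> bool) \<Rightarrow> 'a set list \<Rightarrow> bool" where
  "greedy_partition V E P \<longleftrightarrow> good_partition V E P \<and>
     (\<forall>i<length P. Kfree (card (P ! i) + 1) (\<Union>(set (take (Suc i) P))) E)"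

end

theory Submission
  imports Defs
begin

text \<open>Add the cliques of a greedy partition one at a time in increasing order of size.
When a clique \<open>C\<close> of size \<open>s\<close> is added, each of the \<open>n\<close> earlier vertices has a non-neighbour
in \<open>C\<close> (otherwise it would extend \<open>C\<close> to a clique on \<open>s + 1\<close> vertices), so at most
\<open>n (s - 1) + s (s - 1) / 2\<close> edges are added. Writing \<open>r\<^sub>k\<close> for the number of cliques of size
at least \<open>k\<close>, so that \<open>n = r\<^sub>1 + r\<^sub>2 + r\<^sub>3\<close>, this increment is exactly the growth of
\<open>r\<^sub>1 r\<^sub>2 + r\<^sub>1 r\<^sub>3 + r\<^sub>2 r\<^sub>3 = r\<^sub>1 (n - r\<^sub>1) + r\<^sub>2 (n - r\<^sub>1 - r\<^sub>2)\<close>.\<close>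

definition num_cliques_ge :: "nat \<Rightarrow> 'a set list \<Rightarrow> nat" where
  "num_cliques_ge k P = length (filter (\<lambda>C. card C \<ge> k) P)"

definition cross_edges :: "'a set \<Rightarrow> 'a set \<Rightarrow> ('a \<Rightarrow> 'a \<Rightarrow> bool) \<Rightarrow> 'a set set" where
  "cross_edges A B E = {{u, v} | u v. u \<in> A \<and> v \<in> B \<and> E u v}"

lemma card_edges_le_choose_2:
  assumes "finite C" and "\<forall>v. \<not> E v v"
  shows "card (edges C E) \<le> card C choose 2"
proof -
  have "edges C E \<subseteq> {A. A \<subseteq> C \<and> card A = 2}"
    using assms(2) unfolding edges_def by (auto simp: card_insert_if)
  then have "card (edges C E) \<le> card {A. A \<subseteq> C \<and> card A = 2}"
    by (rule card_mono[rotated]) (use assms(1) in simp)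
  also have "\<dots> = card C choose 2"
    using assms(1) by (rule n_subsets)
  finally show ?thesis .
qed

lemma edges_Un_subset:
  assumes "\<forall>u v. E u v \<longrightarrow> E v u"
  shows "edges (A \<union> B) E \<subseteq> edges A E \<union> edges B E \<union> cross_edges A B E"
  using assms unfolding edges_def cross_edges_def by (auto simp: insert_commute) blast+

lemma card_cross_edges_le:
  assumes "finite A" and "finite B" and "\<forall>u\<in>A. \<exists>v\<in>B. \<not> E u v"
  shows "card (cross_edges A B E) \<le> card A * (card B - 1)"
proof -
  have "cross_edges A B E = (\<lambda>(u, v). {u, v}) ` (SIGMA u:A. {v\<in>B. E u v})"
    unfolding cross_edges_def by auto
  also have "card \<dots> \<le> card (SIGMA u:A. {v\<in>B. E u v})"
    by (rule card_image_le) (use assms(1,2) in auto)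
  also have "\<dots> = (\<Sum>u\<in>A. card {v\<in>B. E u v})"
    using assms by (simp add: card_SigmaI)
  also have "\<dots> \<le> (\<Sum>u\<in>A. card B - 1)"
  proof (rule sum_mono)
    fix u assume "u \<in> A"
    then have "{v\<in>B. E u v} \<subset> B"
      using assms(3) by auto
    then have "card {v\<in>B. E u v} < card B"
      using assms(2) by (rule psubset_card_mono[rotated])
    then show "card {v\<in>B. E u v} \<le> card B - 1"
      by simp
  qed
  finally show ?thesis
    by simp
qed

lemma card_edges_Un_le:
  assumes "\<forall>u v. E u v \<longrightarrow> E v u" and "\<forall>v. \<not> E v v"
    and "finite A" and "finite B" and "\<forall>u\<in>A. \<exists>v\<in>B. \<not> E u v"
  shows "card (edges (A \<union> B) E) \<le> card (edges A E) + card A * (card B - 1) + (card B choose 2)"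
proof -
  have "card (edges (A \<union> B) E) \<le> card (edges A E \<union> edges B E \<union> cross_edges A B E)"
    using assms(3,4) by (intro card_mono edges_Un_subset assms(1))
      (auto simp: cross_edges_def edges_def intro: finite_subset[of _ "Pow (A \<union> B)"])
  also have "\<dots> \<le> card (edges A E) + card (edges B E) + card (cross_edges A B E)"
    by (meson add_le_mono card_Un_le le_refl order_trans)
  finally show ?thesis
    using card_edges_le_choose_2[of B E, OF assms(4,2)] card_cross_edges_le[OF assms(3-5)] by linarith
qed

lemma num_cliques_ge_snoc:
  "num_cliques_ge k (P @ [C]) = num_cliques_ge k P + (if card C \<ge> k then 1 else 0)"
  by (simp add: num_cliques_ge_def)

lemma sum_list_card_eq_num_cliques_ge:
  assumes "\<forall>C\<in>set P. 1 \<le> card C \<and> card C \<le> 3"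
  shows "sum_list (map card P) = length P + num_cliques_ge 2 P + num_cliques_ge 3 P"
  using assms by (induction P) (auto simp: num_cliques_ge_def)

lemma card_Union_le_sum_list: "card (\<Union>(set P)) \<le> sum_list (map card P)"
proof (induction P)
  case (Cons C P)
  then show ?case
    using card_Un_le[of C "\<Union>(set P)"] by simp
qed simp

lemma pairwise_products_step:
  fixes r r2 r3 s :: nat
  assumes "1 \<le> s" and "s \<le> 3" and "s = 1 \<Longrightarrow> r2 = 0" and "s \<le> 2 \<Longrightarrow> r3 = 0"
  defines "r2' \<equiv> r2 + (if s \<ge> 2 then 1 else 0)" and "r3' \<equiv> r3 + (if s \<ge> 3 then 1 else 0)"
  shows "r * r2 + r * r3 + r2 * r3 + (r + r2 + r3) * (s - 1) + (s choose 2)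
    = (r + 1) * r2' + (r + 1) * r3' + r2' * r3'"
proof -
  consider "s = 1" | "s = 2" | "s = 3"
    using assms(1,2) by linarith
  then show ?thesis
    by cases (use assms in \<open>simp_all add: r2'_def r3'_def numeral_eq_Suc algebra_simps\<close>)
qed

lemma card_edges_le_pairwise_products:
  assumes "\<forall>u v. E u v \<longrightarrow> E v u" and "\<forall>v. \<not> E v v"
    and "\<forall>C\<in>set P. C \<noteq> {} \<and> finite C \<and> card C \<le> 3"
    and "sorted (map card P)"
    and "\<forall>i<length P. \<forall>u\<in>\<Union>(set (take i P)). \<exists>v\<in>P ! i. \<not> E u v"
  shows "card (edges (\<Union>(set P)) E)
    \<le> length P * num_cliques_ge 2 P + length P * num_cliques_ge 3 P
      + num_cliques_ge 2 P * num_cliques_ge 3 P"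
  using assms(3-5)
proof (induction P rule: rev_induct)
  case Nil
  then show ?case
    by (simp add: edges_def)
next
  case (snoc C P)
  let ?U = "\<Union>(set P)" and ?r = "length P"
    and ?r2 = "num_cliques_ge 2 P" and ?r3 = "num_cliques_ge 3 P"
  have cliques: "\<forall>D\<in>set P. D \<noteq> {} \<and> finite D \<and> card D \<le> 3"
    and sorted: "sorted (map card P)" and smaller: "\<forall>D\<in>set P. card D \<le> card C"
    using snoc.prems(1,2) by (auto simp: sorted_append)
  have "\<forall>i<length P. \<forall>u\<in>\<Union>(set (take i P)). \<exists>v\<in>P ! i. \<not> E u v"
  proof (intro allI impI ballI)
    fix i u assume "i < length P" and "u \<in> \<Union>(set (take i P))"
    then show "\<exists>v\<in>P ! i. \<not> E u v"
      using snoc.prems(3)[rule_format, of i u] by (simp add: nth_append)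
  qed
  with cliques sorted have IH: "card (edges ?U E) \<le> ?r * ?r2 + ?r * ?r3 + ?r2 * ?r3"
    by (rule snoc.IH)
  have nonadjacent: "\<forall>u\<in>?U. \<exists>v\<in>C. \<not> E u v"
    using snoc.prems(3)[rule_format, of "length P"] by simp
  have C: "C \<noteq> {}" "finite C" "card C \<le> 3"
    using snoc.prems(1) by auto
  have "card ?U \<le> ?r + ?r2 + ?r3"
    using card_Union_le_sum_list[of P] sum_list_card_eq_num_cliques_ge[of P] cliques
    by (simp add: Suc_le_eq card_gt_0_iff)
  have "card (edges (\<Union>(set (P @ [C]))) E) = card (edges (?U \<union> C) E)"
    by (simp add: Un_commute)
  also have "\<dots> \<le> card (edges ?U E) + card ?U * (card C - 1) + (card C choose 2)"
    using cliques by (intro card_edges_Un_le assms(1,2) C(2) nonadjacent) auto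
  also have "\<dots> \<le> ?r * ?r2 + ?r * ?r3 + ?r2 * ?r3 + (?r + ?r2 + ?r3) * (card C - 1) + (card C choose 2)"
    using IH \<open>card ?U \<le> ?r + ?r2 + ?r3\<close> by (intro add_mono mult_right_mono) auto
  also have "\<dots> = length (P @ [C]) * num_cliques_ge 2 (P @ [C])
      + length (P @ [C]) * num_cliques_ge 3 (P @ [C])
      + num_cliques_ge 2 (P @ [C]) * num_cliques_ge 3 (P @ [C])"
    unfolding num_cliques_ge_snoc length_append_singleton Suc_eq_plus1
  proof (rule pairwise_products_step)
    show "1 \<le> card C"
      using C by (simp add: Suc_le_eq card_gt_0_iff)
    show "card C = 1 \<Longrightarrow> ?r2 = 0" "card C \<le> 2 \<Longrightarrow> ?r3 = 0"
      using smaller by (force simp: num_cliques_ge_def filter_empty_conv)+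
  qed (use C in simp)
  finally show ?case .
qed

lemma is_clique_subset: "is_clique V E C \<Longrightarrow> D \<subseteq> C \<Longrightarrow> is_clique V E D"
  by (auto simp: is_clique_def)

lemma card_clique_less_if_Kfree:
  assumes "Kfree k V E" and "is_clique V E C" and "finite C"
  shows "card C < k"
proof (rule ccontr)
  assume "\<not> card C < k"
  then obtain D where "D \<subseteq> C" "card D = k" "finite D"
    by (meson not_less obtain_subset_with_card_n)
  with assms(1,2) show False
    unfolding Kfree_def using is_clique_subset by blast
qed

lemma card_eq_sum_list_if_good_partition:
  assumes "finite V" and "good_partition V E P"
  shows "card V = sum_list (map card P)"
proof -
  have nonempty: "\<forall>C\<in>set P. C \<noteq> {}" and union: "\<Union>(set P) = V"
    and disjoint: "\<forall>i<length P. \<forall>j<length P. i \<noteq> j \<longrightarrow> P ! i \<inter> P ! j = {}"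
    using assms(2) unfolding good_partition_def by auto
  have "pairwise disjnt (set P)"
    unfolding pairwise_def disjnt_def using disjoint by (metis in_set_conv_nth)
  moreover have "\<And>C. C \<in> set P \<Longrightarrow> finite C"
    using assms(1) union by (auto intro: finite_subset)
  ultimately have "card V = sum card (set P)"
    using union card_Union_disjoint by blast
  moreover have "distinct P"
    unfolding distinct_conv_nth using nonempty disjoint by (metis inf.idem nth_mem)
  ultimately show ?thesis
    by (simp add: sum_list_distinct_conv_sum_set)
qed

lemma greedy_partition_nonadjacent:
  assumes "simple_graph V E" and "greedy_partition V E P"
    and "i < length P" and "u \<in> \<Union>(set (take i P))"
  shows "\<exists>v\<in>P ! i. \<not> E u v"
proof (rule ccontr)
  assume "\<not> ?thesis"
  then have adjacent: "\<forall>v\<in>P ! i. E u v"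
    by blast
  have good: "good_partition V E P"
    and Kfree: "Kfree (card (P ! i) + 1) (\<Union>(set (take (Suc i) P))) E"
    using assms(2,3) unfolding greedy_partition_def by auto
  obtain j where "j < i" "u \<in> P ! j"
    using assms(3,4) by (auto simp: in_set_conv_nth)
  then have "u \<notin> P ! i"
    using good assms(3) unfolding good_partition_def by (metis disjoint_iff less_trans nat_neq_iff)
  have "P ! i \<in> set P"
    using assms(3) by simp
  then have "is_clique V E (P ! i)" and "finite (P ! i)"
    using good assms(1) unfolding good_partition_def simple_graph_def is_clique_def
    by (auto intro: finite_subset)
  then have "is_clique (\<Union>(set (take (Suc i) P))) E (insert u (P ! i))"
    using adjacent assms(1,4) unfolding is_clique_def simple_graph_def take_Suc_conv_app_nth[OF assms(3)]
    by auto
  with Kfree \<open>u \<notin> P ! i\<close> \<open>finite (P ! i)\<close> show False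
    unfolding Kfree_def by (metis Suc_eq_plus1 card_insert_disjoint finite_insert)
qed

theorem claim6:
  fixes V :: "'a set" and E :: "'a \<Rightarrow> 'a \<Rightarrow> bool" and P :: "'a set list"
  assumes "simple_graph V E"
    and "Kfree 4 V E"
    and "greedy_partition V E P"
  shows "int (card (edges V E)) \<le>
           int (length P) * (int (card V) - int (length P))
         + int (length (filter (\<lambda>C. card C \<ge> 2) P))
             * (int (card V) - int (length P) - int (length (filter (\<lambda>C. card C \<ge> 2) P)))"
proof -
  have graph: "finite V" "\<forall>u v. E u v \<longrightarrow> E v u" "\<forall>v. \<not> E v v"
    using assms(1) unfolding simple_graph_def by auto
  have good: "good_partition V E P"
    using assms(3) unfolding greedy_partition_def by simp
  have cliques: "\<forall>C\<in>set P. C \<noteq> {} \<and> finite C \<and> card C \<le> 3"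
  proof
    fix C assume "C \<in> set P"
    then have "C \<noteq> {}" and "is_clique V E C"
      using good unfolding good_partition_def by auto
    moreover from this(2) have "finite C"
      using graph(1) unfolding is_clique_def by (auto intro: finite_subset)
    moreover from calculation have "card C < 4"
      by (intro card_clique_less_if_Kfree[OF assms(2)])
    ultimately show "C \<noteq> {} \<and> finite C \<and> card C \<le> 3"
      by simp
  qed
  have "card (edges V E)
      \<le> length P * num_cliques_ge 2 P + length P * num_cliques_ge 3 P
        + num_cliques_ge 2 P * num_cliques_ge 3 P"
    using card_edges_le_pairwise_products[OF graph(2,3) cliques]
      good greedy_partition_nonadjacent[OF assms(1,3)]
    unfolding good_partition_def by simp
  moreover have "card V = length P + num_cliques_ge 2 P + num_cliques_ge 3 P"
    using card_eq_sum_list_if_good_partition[OF graph(1) good] cliques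
    by (simp add: sum_list_card_eq_num_cliques_ge Suc_le_eq card_gt_0_iff)
  ultimately show ?thesis
    unfolding num_cliques_ge_def[symmetric] by (simp add: algebra_simps flip: of_nat_add of_nat_mult)
qed

end
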